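(* Let $p$ be a prime and $k,\ell$ integers with $k>0$, $\ell\ge 0$; put $q=p^k$ and $Q=p^{\ell}$. Then the following are equivalent: (1) $\gcd(q-1,Q+1)=1$, or equivalently $p=2$ and $\operatorname{ord}_2(k)\le\operatorname{ord}_2(\ell)$; (2) $f_1(X)=X^{q^2Q+q}+X^{qQ+q^2}+X^{Q+1}$ permutes $\mathbb{F}_{q^3}$; (3) $f_2(X)=X^{q^2Q+1}+X^{qQ+1}+X^{Q+q^2}+X^{Q+q}-X^{Q+1}$ permutes $\mathbb{F}_{q^3}$; (4) $f_3(X)=X^{q^2Q+q}+X^{qQ+q}+X^{Q+q^2}-X^{Q+q}+X^{Q+1}$ permutes $\mathbb{F}_{q^3}$; (5) $f_4(X)=X^{q^2Q+q^2}+X^{qQ+q^2}-X^{Q+q^2}+X^{Q+q}+X^{Q+1}$ permutes $\mathbb{F}_{q^3}$.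
   Context: A polynomial permutes $\mathbb{F}_{q^3}$ if the induced map $\mathbb{F}_{q^3}\to\mathbb{F}_{q^3}$ is a bijection. For a nonzero integer $N$, $\operatorname{ord}_2(N)$ is the largest integer $s\ge0$ with $2^s\mid N$, and $\operatorname{ord}_2(0)=\infty$. *)

theory Defs
  imports "HOL-Computational_Algebra.Primes" "HOL-Library.Extended_Nat"
begin

definition ord2 :: "nat \<Rightarrow> enat" where
  "ord2 N = (if N = 0 then \<infinity> else enat (multiplicity (2::nat) N))"

end

theory Submission
  imports Defs "HOL-Computational_Algebra.Polynomial" "HOL-Number_Theory.Cong"
begin

text \<open>
  For odd \<open>p\<close> both \<open>q - 1\<close> and \<open>Q + 1\<close> are even, so the substance is the case
  \<open>q = 2 ^ k\<close>, \<open>Q = 2 ^ l\<close>.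
  Every \<open>x\<close> splits as \<open>x = u + t\<close> with \<open>t = x + x ^ q + x ^ q\<^sup>2\<close> in \<open>\<bbbF>\<^sub>q\<close> and \<open>u\<close> of trace
  zero, and \<open>f\<^sub>i (u + t) = G\<^sub>i u + t ^ (Q + 1)\<close>. Adding the \<open>q\<close>-th power cancels the \<open>t\<close>-part and
  leaves a Frobenius image of \<open>H u = u ^ (Q + 1) + (u ^ q) ^ (Q + 1)\<close>, so \<open>f\<^sub>i\<close> is injective as
  soon as \<open>t \<mapsto> t ^ (Q + 1)\<close> is, and \<open>H\<close> is injective on elements of trace zero. For the
  latter, adjoin \<open>\<omega>\<close> with \<open>\<omega>\<^sup>2 + \<omega> + 1 = 0\<close>: the element \<open>a = (u ^ q + u) + u \<omega>\<close> determines
  \<open>u\<close>, and \<open>a ^ (Q + 1)\<close> (or \<open>a ^ (Q + q)\<close> when \<open>k\<close> and \<open>l\<close> are odd) depends only on \<open>H u\<close>.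
  Under \<open>ord\<^sub>2 k \<le> ord\<^sub>2 l\<close> these exponents are coprime to \<open>N - 1\<close> for an \<open>N\<close> with
  \<open>z ^ N = z\<close> on the whole ring, so the power maps are injective.

  Conversely, if \<open>gcd (q - 1) (Q + 1) > 1\<close>, some root of unity \<open>z \<noteq> 1\<close> has \<open>z ^ q = z\<close> and
  \<open>z ^ (Q + 1) = 1\<close>; then every monomial \<open>x ^ (a * Q + b)\<close> with \<open>a, b \<in> {1, q, q\<^sup>2}\<close> takes the
  value \<open>1\<close> at both \<open>z\<close> and \<open>1\<close>.
\<close>

lemma numeral_CHAR_2:
  assumes "CHAR('a::semiring_1) = 2"
  shows "(numeral (Num.Bit0 n) :: 'a) = 0" and "(numeral (Num.Bit1 n) :: 'a) = 1"
proof -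
  have "of_nat (numeral (Num.Bit0 n)) = (0::'a)"
    by (simp only: of_nat_eq_0_iff_char_dvd assms even_numeral)
  then show *: "(numeral (Num.Bit0 n) :: 'a) = 0"
    by simp
  show "(numeral (Num.Bit1 n) :: 'a) = 1"
    by (simp only: numeral_Bit1 numeral_Bit0[symmetric] * add_0)
qed

lemma add_self_CHAR_2:
  assumes "CHAR('a::ring_1) = 2"
  shows "(x::'a) + x = 0"
  using uminus_CHAR_2[OF assms, of x] by (simp add: add_eq_0_iff2)

lemma add_power_CHAR_2:
  assumes "CHAR('a::comm_semiring_1) = 2" and "m = 2 ^ n"
  shows "(x + y :: 'a) ^ m = x ^ m + y ^ m"
  using assms by (intro freshmans_dream') simp_all

lemma finite_field_power_card_minus_one:
  fixes x :: "'a::{finite,field}"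
  assumes "x \<noteq> 0"
  shows "x ^ (card (UNIV :: 'a set) - 1) = 1"
proof -
  let ?U = "UNIV - {0::'a}"
  have "bij_betw ((*) x) ?U ?U"
    by (rule bij_betw_byWitness[where f' = "(*) (inverse x)"]) (use assms in auto)
  then have "(\<Prod>y\<in>?U. x * y) = \<Prod>?U"
    using prod.reindex_bij_betw[where g = id] by simp
  then have "x ^ card ?U * \<Prod>?U = 1 * \<Prod>?U"
    by (simp add: prod.distrib)
  moreover have "\<Prod>?U \<noteq> 0"
    by simp
  ultimately show ?thesis
    by (simp add: card_Diff_singleton)
qed

lemma finite_field_power_card:
  fixes x :: "'a::{finite,field}"
  shows "x ^ card (UNIV :: 'a set) = x"
proof (cases "x = 0")
  case False
  have "card (UNIV :: 'a set) = Suc (card (UNIV :: 'a set) - 1)"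
    by (simp add: finite_UNIV_card_ge_0)
  then show ?thesis
    using finite_field_power_card_minus_one[OF False] by (metis power_Suc mult_1_right)
qed (simp add: finite_UNIV_card_ge_0)

lemma of_nat_card_eq_0:
  "of_nat (card (UNIV :: 'a::{finite,ring_1} set)) = (0::'a)"
proof -
  have "(\<Sum>y\<in>UNIV. y + 1) = (\<Sum>y\<in>UNIV. y :: 'a)"
    by (rule sum.reindex_bij_witness[where i = "\<lambda>y. y - 1" and j = "\<lambda>y. y + 1"]) auto
  then show ?thesis
    by (simp add: sum.distrib)
qed

lemma CHAR_finite_field:
  assumes "prime p" and "card (UNIV :: 'a::{finite,field} set) = p ^ n"
  shows "CHAR('a) = p"
proof -
  have "prime CHAR('a)"
    by (rule prime_CHAR_semidom) (simp add: finite_imp_CHAR_pos)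
  moreover have "of_nat (p ^ n) = (0::'a)"
    using of_nat_card_eq_0[where 'a = 'a] assms(2) by metis
  then have "CHAR('a) dvd p ^ n"
    by (simp only: of_nat_eq_0_iff_char_dvd)
  ultimately show ?thesis
    using assms(1) by (metis prime_dvd_power primes_dvd_imp_eq)
qed

lemma card_roots_of_unity_le:
  assumes "M > 0"
  shows "card {x::'a::idom. x ^ M = 1} \<le> M"
proof -
  define P :: "'a poly" where "P = Polynomial.monom 1 M + [:-1:]"
  have "degree P = M"
    using assms unfolding P_def by (subst degree_add_eq_left) (simp_all add: degree_monom_eq)
  moreover have "P \<noteq> 0"
    using assms \<open>degree P = M\<close> by auto
  moreover have "{x. x ^ M = 1} = {x. poly P x = 0}"
    by (simp add: P_def poly_monom)
  ultimately show ?thesis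
    using card_poly_roots_bound[of P] by simp
qed

lemma finite_field_nontrivial_root_of_unity:
  fixes d :: nat
  assumes "d dvd card (UNIV :: 'a::{finite,field} set) - 1" and "d > 1"
  shows "\<exists>z::'a. z \<noteq> 1 \<and> z ^ d = 1"
proof (rule ccontr)
  assume no_root: "\<nexists>z::'a. z \<noteq> 1 \<and> z ^ d = 1"
  obtain M where M: "card (UNIV :: 'a set) - 1 = M * d"
    using assms(1) by (metis dvdE mult.commute)
  have "card (UNIV :: 'a set) \<ge> 2"
    using card_mono[of "UNIV :: 'a set" "{0, 1}"] by simp
  then have "M > 0"
    using M by (cases M) auto
  have "x ^ M = 1" if "x \<noteq> 0" for x :: 'a
  proof -
    have "(x ^ M) ^ d = 1"
      using finite_field_power_card_minus_one[OF that] by (simp only: M power_mult)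
    then show ?thesis
      using no_root by blast
  qed
  then have "card (UNIV - {0::'a}) \<le> card {x::'a. x ^ M = 1}"
    by (intro card_mono) auto
  also have "\<dots> \<le> M"
    using \<open>M > 0\<close> by (rule card_roots_of_unity_le)
  finally show False
    using M \<open>M > 0\<close> assms(2) by (simp add: card_Diff_singleton)
qed

section \<open>The numbers \<open>2 ^ m + 1\<close> and \<open>2 ^ n - 1\<close>\<close>

lemma dvd_two_pow_add_one_iff_cong:
  "(c::nat) dvd 2 ^ m + 1 \<longleftrightarrow> [2 ^ m = - 1] (mod int c)"
proof -
  have "c dvd 2 ^ m + 1 \<longleftrightarrow> int c dvd 2 ^ m + 1"
    by (metis int_dvd_int_iff of_nat_1 of_nat_add of_nat_numeral of_nat_power)
  then show ?thesis
    by (simp add: cong_iff_dvd_diff)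
qed

lemma dvd_two_pow_diff_one_iff_cong:
  "(c::nat) dvd 2 ^ n - 1 \<longleftrightarrow> [2 ^ n = 1] (mod int c)"
proof -
  have "int (2 ^ n - 1) = 2 ^ n - 1"
    by simp
  then have "c dvd 2 ^ n - 1 \<longleftrightarrow> int c dvd 2 ^ n - 1"
    by (metis int_dvd_int_iff)
  then show ?thesis
    by (simp add: cong_iff_dvd_diff)
qed

lemma coprime_two_pow_add_one_two_pow_diff_one:
  fixes m n d n' :: nat
  assumes n: "n = d * n'" and "odd n'" and "d dvd m" and "n > 0"
  shows "coprime (2 ^ m + 1) (2 ^ n - 1 :: nat)"
proof (rule coprimeI)
  fix c :: nat
  assume cm: "c dvd 2 ^ m + 1" and cn: "c dvd 2 ^ n - 1"
  obtain m' where m: "m = d * m'"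
    using \<open>d dvd m\<close> by blast
  have "[(2 ^ m) ^ n' = (- 1) ^ n'] (mod int c)"
    by (intro cong_pow) (use cm dvd_two_pow_add_one_iff_cong in blast)
  then have minus_one: "[2 ^ (m * n') = - 1] (mod int c)"
    using \<open>odd n'\<close> by (simp add: power_mult)
  have "[(2 ^ n) ^ m' = 1 ^ m'] (mod int c)"
    by (intro cong_pow) (use cn dvd_two_pow_diff_one_iff_cong in blast)
  moreover have "n * m' = m * n'"
    by (simp add: m n)
  ultimately have one: "[2 ^ (m * n') = 1] (mod int c)"
    by (simp only: power_mult[symmetric] power_one)
  have "[- 1 = 1] (mod int c)"
    using cong_trans[OF cong_sym[OF minus_one] one] .
  then have "c dvd 2"
    by (simp add: cong_iff_dvd_diff flip: int_dvd_int_iff)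
  then have "c = 1 \<or> c = 2"
    using two_is_prime_nat unfolding prime_nat_iff by blast
  moreover have "odd (2 ^ n - 1 :: nat)"
    using \<open>n > 0\<close> by simp
  then have "odd c"
    using cn by (meson dvd_trans)
  ultimately show "is_unit c"
    by auto
qed

lemma not_coprime_two_pow_add_one_two_pow_diff_one:
  fixes m n d a :: nat
  assumes m: "m = d * a" and "odd a" and "2 * d dvd n" and "d > 0"
  shows "\<not> coprime (2 ^ m + 1) (2 ^ n - 1 :: nat)"
proof -
  let ?c = "2 ^ d + 1 :: nat"
  have base: "[2 ^ d = - 1] (mod int ?c)"
    using dvd_two_pow_add_one_iff_cong[of ?c d] by simp
  obtain b where n: "n = d * (2 * b)"
    using \<open>2 * d dvd n\<close> unfolding dvd_def by (metis mult.assoc mult.left_commute)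
  have "[(2 ^ d) ^ a = (- 1) ^ a] (mod int ?c)"
    using base by (rule cong_pow)
  then have "[2 ^ m = - 1] (mod int ?c)"
    using \<open>odd a\<close> by (simp add: m power_mult)
  then have "?c dvd 2 ^ m + 1"
    using dvd_two_pow_add_one_iff_cong by blast
  moreover have "[(2 ^ d) ^ (2 * b) = (- 1) ^ (2 * b)] (mod int ?c)"
    using base by (rule cong_pow)
  then have "[2 ^ n = 1] (mod int ?c)"
    by (simp add: n power_mult)
  then have "?c dvd 2 ^ n - 1"
    using dvd_two_pow_diff_one_iff_cong by blast
  moreover have "?c \<noteq> 1"
    using \<open>d > 0\<close> by simp
  ultimately show ?thesis
    by (metis coprime_common_divisor_nat)
qed

lemma ord2_le_iff_odd_cofactor:
  assumes "k > 0"
  shows "ord2 k \<le> ord2 l \<longleftrightarrow> (\<exists>d k'. k = d * k' \<and> odd k' \<and> d dvd l)"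
proof
  assume le: "ord2 k \<le> ord2 l"
  obtain k' where k': "k = 2 ^ multiplicity 2 k * k'" "\<not> 2 dvd k'"
    by (rule multiplicity_decompose'[of k 2]) (use assms in auto)
  have "2 ^ multiplicity 2 k dvd l"
  proof (cases "l = 0")
    case False
    then have "multiplicity 2 k \<le> multiplicity 2 l"
      using le assms by (simp add: ord2_def)
    then show ?thesis
      by (rule multiplicity_dvd')
  qed simp
  then show "\<exists>d k'. k = d * k' \<and> odd k' \<and> d dvd l"
    using k' by blast
next
  assume "\<exists>d k'. k = d * k' \<and> odd k' \<and> d dvd l"
  then obtain d k' where k: "k = d * k'" "odd k'" "d dvd l"
    by blast
  show "ord2 k \<le> ord2 l"
  proof (cases "l = 0")
    case False
    have "multiplicity (2::nat) k = multiplicity 2 d + multiplicity 2 k'"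
      unfolding k(1) by (rule prime_elem_multiplicity_mult_distrib) (use assms k in auto)
    moreover have "multiplicity (2::nat) k' = 0"
      using k by (simp add: not_dvd_imp_multiplicity_0)
    moreover have "multiplicity (2::nat) d \<le> multiplicity 2 l"
      using k False by (intro dvd_imp_multiplicity_le)
    ultimately show ?thesis
      using assms False by (simp add: ord2_def)
  qed (simp add: ord2_def)
qed

lemma coprime_two_pow_add_one_iff_ord2_le:
  assumes "k > 0"
  shows "coprime (2 ^ l + 1) (2 ^ k - 1 :: nat) \<longleftrightarrow> ord2 k \<le> ord2 l"
proof
  assume "ord2 k \<le> ord2 l"
  then obtain d k' where "k = d * k'" "odd k'" "d dvd l"
    using assms ord2_le_iff_odd_cofactor by blast
  then show "coprime (2 ^ l + 1) (2 ^ k - 1 :: nat)"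
    using assms by (intro coprime_two_pow_add_one_two_pow_diff_one)
next
  assume coprime: "coprime (2 ^ l + 1) (2 ^ k - 1 :: nat)"
  show "ord2 k \<le> ord2 l"
  proof (rule ccontr)
    assume "\<not> ord2 k \<le> ord2 l"
    then have "l \<noteq> 0" and less: "multiplicity 2 l < multiplicity 2 k"
      using assms by (auto simp: ord2_def split: if_splits)
    obtain a where l: "l = 2 ^ multiplicity 2 l * a" "\<not> 2 dvd a"
      by (rule multiplicity_decompose'[of l 2]) (use \<open>l \<noteq> 0\<close> in auto)
    have "2 * 2 ^ multiplicity 2 l dvd k"
      using less by (simp add: multiplicity_dvd' flip: power_Suc)
    then have "\<not> coprime (2 ^ l + 1) (2 ^ k - 1 :: nat)"
      using l by (intro not_coprime_two_pow_add_one_two_pow_diff_one) auto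
    then show False
      using coprime by blast
  qed
qed

lemma coprime_two_pow_add_one_two_pow_triple_diff_one:
  assumes "k > 0" and "ord2 k \<le> ord2 l"
  shows "coprime (2 ^ l + 1) (2 ^ (3 * k) - 1 :: nat)"
proof -
  obtain d k' where "k = d * k'" "odd k'" "d dvd l"
    using assms ord2_le_iff_odd_cofactor by blast
  then show ?thesis
    using assms by (intro coprime_two_pow_add_one_two_pow_diff_one[where d = d and n' = "3 * k'"]) auto
qed

lemma even_if_ord2_le_even:
  assumes "k > 0" and "ord2 k \<le> ord2 l" and "even k"
  shows "even l"
  using assms by (metis ord2_le_iff_odd_cofactor dvd_trans even_mult_iff)

lemma coprime_two_pow_add_two_pow_two_pow_diff_one:
  assumes "odd k" and "odd l"
  shows "coprime (2 ^ l + 2 ^ k) (2 ^ (6 * k) - 1 :: nat)"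
proof -
  obtain i j where ij: "2 ^ l + 2 ^ k = 2 ^ i * (2 ^ j + 1 :: nat)" and "even j"
  proof (cases "k \<le> l")
    case True
    then have "2 ^ l + 2 ^ k = 2 ^ k * (2 ^ (l - k) + 1 :: nat)"
      by (simp add: algebra_simps flip: power_add)
    moreover have "even (l - k)"
      using assms True by presburger
    ultimately show ?thesis
      by (rule that)
  next
    case False
    then have "2 ^ l + 2 ^ k = 2 ^ l * (2 ^ (k - l) + 1 :: nat)"
      by (simp add: algebra_simps flip: power_add)
    moreover have "even (k - l)"
      using assms False by presburger
    ultimately show ?thesis
      by (rule that)
  qed
  have "coprime (2 ^ j + 1) (2 ^ (6 * k) - 1 :: nat)"
    using assms \<open>even j\<close> odd_pos[OF \<open>odd k\<close>]
    by (intro coprime_two_pow_add_one_two_pow_diff_one[where d = 2 and n' = "3 * k"]) auto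
  moreover have "coprime (2 ^ i) (2 ^ (6 * k) - 1 :: nat)"
    using odd_pos[OF \<open>odd k\<close>] by simp
  ultimately show ?thesis
    unfolding ij coprime_mult_left_iff by blast
qed

lemma gcd_eq_one_iff_ord2_le:
  fixes p k l :: nat
  assumes "prime p" and "k > 0"
  shows "gcd (p ^ k - 1) (p ^ l + 1) = 1 \<longleftrightarrow> p = 2 \<and> ord2 k \<le> ord2 l"
proof (cases "p = 2")
  case True
  then show ?thesis
    using coprime_two_pow_add_one_iff_ord2_le[OF assms(2), of l]
    by (simp add: coprime_iff_gcd_eq_1 gcd.commute)
next
  case False
  then have "p > 2"
    using prime_ge_2_nat[OF assms(1)] by simp
  then have "odd p"
    using prime_odd_nat[OF assms(1)] by blast
  then have "even (p ^ k - 1)" and "even (p ^ l + 1)"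
    by simp_all
  then have "2 dvd gcd (p ^ k - 1) (p ^ l + 1)"
    by simp
  then show ?thesis
    using False by (metis odd_one)
qed

lemma power_one_add_mult_eq_self:
  fixes z :: "'a::monoid_mult"
  assumes "\<And>z::'a. z ^ N = z"
  shows "z ^ (1 + j * (N - 1)) = z"
proof (induction j)
  case (Suc j)
  have "1 + Suc j * (N - 1) = (1 + j * (N - 1)) + (N - 1)"
    by simp
  then have "z ^ (1 + Suc j * (N - 1)) = z ^ (1 + j * (N - 1)) * z ^ (N - 1)"
    by (simp only: power_add)
  also have "\<dots> = z * z ^ (N - 1)"
    by (simp only: Suc)
  also have "\<dots> = z"
    using assms by (cases N) simp_all
  finally show ?case .
qed simp

lemma inj_power_if_coprime:
  fixes e N :: nat
  assumes "\<And>z::'a::monoid_mult. z ^ N = z" and "coprime e (N - 1)" and "e > 0"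
  shows "inj (\<lambda>z::'a. z ^ e)"
proof -
  obtain d j where "e * d = (N - 1) * j + 1"
    using bezout_nat[of e "N - 1"] assms(2,3) by auto
  then have "(z ^ e) ^ d = z" for z :: 'a
    using power_one_add_mult_eq_self[OF assms(1), of z j] by (simp add: mult.commute flip: power_mult)
  then show ?thesis
    by (metis injI)
qed

lemma power_power_commute: "((x::'a::monoid_mult) ^ m) ^ n = (x ^ n) ^ m"
  by (simp add: mult.commute flip: power_mult)

lemma power_power_eq_self:
  assumes "\<And>x::'a::monoid_mult. x ^ N = x"
  shows "(x::'a) ^ N ^ j = x"
proof (induction j)
  case (Suc j)
  then show ?case
    by (metis assms power_Suc2 power_mult)
qed simp

lemma power_two_pow_eq_self_if_cube:
  fixes x :: "'a::monoid_mult"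
  assumes q: "q = 2 ^ k" and cube: "\<And>x::'a. x ^ q ^ 3 = x"
  shows "x ^ 2 ^ (3 * k) = x" and "x ^ 2 ^ (6 * k) = x"
proof -
  have "q ^ 3 = 2 ^ (3 * k)"
    unfolding q by (metis power_mult mult.commute)
  then show fermat3: "x ^ 2 ^ (3 * k) = x" for x :: 'a
    using cube by metis
  have "(2::nat) ^ (6 * k) = 2 ^ (3 * k) * 2 ^ (3 * k)"
    by (simp flip: power_add)
  then show "x ^ 2 ^ (6 * k) = x"
    by (metis power_mult fermat3)
qed

section \<open>Adjoining a primitive cube root of unity\<close>

text \<open>\<open>Eis a b\<close> stands for \<open>a + b \<omega>\<close> in \<open>R[\<omega>]\<close>, where \<open>\<omega>\<^sup>2 = - 1 - \<omega>\<close>.\<close>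

datatype 'a eis = Eis (eis_re: 'a) (eis_im: 'a)

instantiation eis :: (comm_ring_1) comm_ring_1
begin

definition "0 = Eis 0 0"
definition "1 = Eis 1 0"
definition "x + y = Eis (eis_re x + eis_re y) (eis_im x + eis_im y)"
definition "- x = Eis (- eis_re x) (- eis_im x)"
definition "x - y = Eis (eis_re x - eis_re y) (eis_im x - eis_im y)"
definition "x * y = Eis (eis_re x * eis_re y - eis_im x * eis_im y)
  (eis_re x * eis_im y + eis_im x * eis_re y - eis_im x * eis_im y)"

instance
  by standard
    (simp_all add: zero_eis_def one_eis_def plus_eis_def uminus_eis_def minus_eis_def times_eis_def
      algebra_simps)

end

lemma Eis_mult: "Eis a b * Eis c d = Eis (a * c - b * d) (a * d + b * c - b * d)"
  by (simp add: times_eis_def)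

lemma Eis_square_CHAR_2:
  assumes "CHAR('a::comm_ring_1) = 2"
  shows "Eis a b ^ 2 = Eis ((a + b) ^ 2) (b ^ 2 :: 'a)"
  by (simp add: power2_eq_square Eis_mult algebra_simps minus_CHAR_2[OF assms] numeral_CHAR_2[OF assms])

lemma Eis_power_two_pow_CHAR_2:
  assumes "CHAR('a::comm_ring_1) = 2"
  shows "Eis a b ^ 2 ^ j = (if even j then Eis (a ^ 2 ^ j) (b ^ 2 ^ j)
    else Eis ((a + b) ^ 2 ^ j) (b ^ 2 ^ j :: 'a))"
proof (induction j)
  case (Suc j)
  have square: "x ^ 2 ^ Suc j = (x ^ 2 ^ j) ^ 2" for x :: "'b::monoid_mult"
    by (simp add: mult.commute flip: power_mult)
  show ?case
    unfolding square Suc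
    by (simp add: Eis_square_CHAR_2[OF assms] add_power_CHAR_2[OF assms refl]
        add.assoc add_self_CHAR_2[OF assms])
qed simp

lemma Eis_power_two_pow_eq_self:
  assumes "CHAR('a::comm_ring_1) = 2" and "\<And>c::'a. c ^ 2 ^ m = c" and "even m"
  shows "z ^ 2 ^ m = (z :: 'a eis)"
  by (cases z) (simp add: Eis_power_two_pow_CHAR_2 assms)

definition trace_zero :: "nat \<Rightarrow> 'a::comm_ring_1 set" where
  "trace_zero q = {u. u + u ^ q + (u ^ q) ^ q = 0}"

lemma trace_zero_iff_CHAR_2:
  assumes "CHAR('a::comm_ring_1) = 2"
  shows "u \<in> trace_zero q \<longleftrightarrow> (u ^ q) ^ q = u + (u ^ q :: 'a)"
  by (auto simp: trace_zero_def add_eq_0_iff2 uminus_CHAR_2[OF assms])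

lemma frob_trace_zero:
  assumes char: "CHAR('a::comm_ring_1) = 2" and q: "q = 2 ^ k" and Q: "Q = 2 ^ l"
    and u: "u \<in> trace_zero q"
  shows "(u ^ q) ^ q = u + u ^ q" and "(u ^ Q) ^ q = (u ^ q) ^ Q"
    and "((u ^ q) ^ Q) ^ q = u ^ Q + (u ^ q :: 'a) ^ Q"
proof -
  show trace: "(u ^ q) ^ q = u + u ^ q"
    using u trace_zero_iff_CHAR_2[OF char] by blast
  show "(u ^ Q) ^ q = (u ^ q) ^ Q"
    by (rule power_power_commute)
  show "((u ^ q) ^ Q) ^ q = u ^ Q + (u ^ q) ^ Q"
    by (simp only: power_power_commute[of "u ^ q" Q q] trace add_power_CHAR_2[OF char Q])
qed

lemma frob_power_add_frob_power:
  assumes char: "CHAR('a::comm_ring_1) = 2" and q: "q = 2 ^ k" and Q: "Q = 2 ^ l"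
    and u: "u \<in> trace_zero q"
  shows "(u ^ (Q + 1) + (u ^ q) ^ (Q + 1)) ^ q
    = (u ^ q) ^ Q * u ^ q + (u ^ Q + (u ^ q) ^ Q) * (u + u ^ q :: 'a)"
  by (simp only: power_add power_one_right add_power_CHAR_2[OF char q] power_mult_distrib
      frob_trace_zero[OF char q Q u])

lemma Eis_power_Q_add_one:
  fixes u :: "'a::comm_ring_1"
  assumes char: "CHAR('a) = 2" and q: "q = 2 ^ k" and Q: "Q = 2 ^ l" and "even l"
    and u: "u \<in> trace_zero q"
  defines "h \<equiv> u ^ (Q + 1) + (u ^ q) ^ (Q + 1)"
  shows "Eis (u ^ q + u) u ^ (Q + 1) = Eis (h + h ^ q) (h ^ q)"
proof -
  have ring_identity: "Eis (b1 + b) b * Eis (v1 + v) v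
    = Eis ((b * v + b1 * v1) + (b1 * v1 + (b + b1) * (v + v1))) (b1 * v1 + (b + b1) * (v + v1))"
    for b b1 v v1 :: 'a
    by (simp add: Eis_mult algebra_simps minus_CHAR_2[OF char] numeral_CHAR_2[OF char])
  have "Eis (u ^ q + u) u ^ Q = Eis ((u ^ q) ^ Q + u ^ Q) (u ^ Q)"
    using \<open>even l\<close> by (simp add: Q Eis_power_two_pow_CHAR_2[OF char] add_power_CHAR_2[OF char refl])
  then have "Eis (u ^ q + u) u ^ (Q + 1) = Eis ((u ^ q) ^ Q + u ^ Q) (u ^ Q) * Eis (u ^ q + u) u"
    by (simp only: power_add power_one_right)
  also have "\<dots> = Eis (h + h ^ q) (h ^ q)"
    unfolding h_def frob_power_add_frob_power[OF char q Q u]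
    by (simp only: power_add power_one_right ring_identity)
  finally show ?thesis .
qed

lemma Eis_power_Q_add_q:
  fixes u :: "'a::comm_ring_1"
  assumes char: "CHAR('a) = 2" and q: "q = 2 ^ k" and Q: "Q = 2 ^ l" and "odd k" and "odd l"
    and u: "u \<in> trace_zero q"
  defines "h \<equiv> u ^ (Q + 1) + (u ^ q) ^ (Q + 1)"
  shows "Eis (u ^ q + u) u ^ (Q + q) = Eis (h + h ^ q) h"
proof -
  have ring_identity: "Eis b1 b * Eis (v + v1) v1
    = Eis ((b * v + b1 * v1) + (b1 * v1 + (b + b1) * (v + v1))) (b * v + b1 * v1)"
    for b b1 v v1 :: 'a
    by (simp add: Eis_mult algebra_simps minus_CHAR_2[OF char] numeral_CHAR_2[OF char])
  have "Eis (u ^ q + u) u ^ Q = Eis ((u ^ q) ^ Q) (u ^ Q)"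
    using \<open>odd l\<close> by (simp add: Q Eis_power_two_pow_CHAR_2[OF char] add.assoc add_self_CHAR_2[OF char])
  moreover have "Eis (u ^ q + u) u ^ q = Eis (u + u ^ q) (u ^ q)"
    using \<open>odd k\<close> frob_trace_zero(1)[OF char q Q u]
    by (simp add: q Eis_power_two_pow_CHAR_2[OF char] add.assoc add_self_CHAR_2[OF char])
  ultimately have "Eis (u ^ q + u) u ^ (Q + q) = Eis ((u ^ q) ^ Q) (u ^ Q) * Eis (u + u ^ q) (u ^ q)"
    by (simp only: power_add)
  also have "\<dots> = Eis (h + h ^ q) h"
    unfolding h_def frob_power_add_frob_power[OF char q Q u]
    by (simp only: power_add power_one_right ring_identity)
  finally show ?thesis .
qed

lemma Eis_power_determined_by_power_add_frob_power:
  fixes k l q Q :: nat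
  assumes char: "CHAR('a::comm_ring_1) = 2" and q: "q = 2 ^ k" and Q: "Q = 2 ^ l"
    and "k > 0" and ord2: "ord2 k \<le> ord2 l" and cube: "\<And>x::'a. x ^ q ^ 3 = x"
  obtains N e \<Phi> where "\<And>z::'a eis. z ^ N = z" and "coprime e (N - 1)" and "e > 0"
    and "\<And>u::'a. u \<in> trace_zero q \<Longrightarrow>
      Eis (u ^ q + u) u ^ e = \<Phi> (u ^ (Q + 1) + (u ^ q) ^ (Q + 1))"
proof -
  note fermat3 = power_two_pow_eq_self_if_cube(1)[OF q cube]
  note fermat6 = power_two_pow_eq_self_if_cube(2)[OF q cube]
  \<comment> \<open>Raising to the power \<open>2 ^ m\<close> fixes \<open>\<omega>\<close> only for even \<open>m\<close>, so \<open>N = 2 ^ (3 * k)\<close>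
    serves for even \<open>k\<close> and \<open>N = 2 ^ (6 * k)\<close> for odd \<open>k\<close>.\<close>
  show ?thesis
  proof (cases "even k")
    case True
    then have "even l"
      using even_if_ord2_le_even \<open>k > 0\<close> ord2 by blast
    have "z ^ 2 ^ (3 * k) = z" for z :: "'a eis"
      using True by (intro Eis_power_two_pow_eq_self[OF char fermat3]) simp
    moreover have "coprime (Q + 1) (2 ^ (3 * k) - 1)"
      unfolding Q by (rule coprime_two_pow_add_one_two_pow_triple_diff_one[OF \<open>k > 0\<close> ord2])
    ultimately show ?thesis
      using Eis_power_Q_add_one[OF char q Q \<open>even l\<close>]
      by (intro that[of "2 ^ (3 * k)" "Q + 1" "\<lambda>h::'a. Eis (h + h ^ q) (h ^ q)"]) simp_all
  next
    case False
    have Eis_fermat6: "z ^ 2 ^ (6 * k) = z" for z :: "'a eis"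
      by (intro Eis_power_two_pow_eq_self[OF char fermat6]) simp
    show ?thesis
    proof (cases "even l")
      case True
      have "coprime (Q + 1) (2 ^ (6 * k) - 1)"
        unfolding Q using False True odd_pos[of k]
        by (intro coprime_two_pow_add_one_two_pow_diff_one[where d = 2 and n' = "3 * k"]) auto
      then show ?thesis
        using Eis_fermat6 Eis_power_Q_add_one[OF char q Q True]
        by (intro that[of "2 ^ (6 * k)" "Q + 1" "\<lambda>h::'a. Eis (h + h ^ q) (h ^ q)"]) simp_all
    next
      case odd_l: False
      have "coprime (Q + q) (2 ^ (6 * k) - 1)"
        unfolding Q q by (rule coprime_two_pow_add_two_pow_two_pow_diff_one[OF False odd_l])
      then show ?thesis
        using Eis_fermat6 Eis_power_Q_add_q[OF char q Q False odd_l]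
        by (intro that[of "2 ^ (6 * k)" "Q + q" "\<lambda>h::'a. Eis (h + h ^ q) h"]) (simp_all add: q)
    qed
  qed
qed

lemma inj_on_trace_zero_power_add_frob_power:
  fixes k l q Q :: nat
  assumes char: "CHAR('a::comm_ring_1) = 2" and q: "q = 2 ^ k" and Q: "Q = 2 ^ l"
    and "k > 0" and ord2: "ord2 k \<le> ord2 l" and cube: "\<And>x::'a. x ^ q ^ 3 = x"
  shows "inj_on (\<lambda>u::'a. u ^ (Q + 1) + (u ^ q) ^ (Q + 1)) (trace_zero q)"
proof (rule inj_onI)
  fix u v :: 'a
  assume "u \<in> trace_zero q" and "v \<in> trace_zero q"
    and eq: "u ^ (Q + 1) + (u ^ q) ^ (Q + 1) = v ^ (Q + 1) + (v ^ q) ^ (Q + 1)"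
  obtain N e \<Phi> where "\<And>z::'a eis. z ^ N = z" and "coprime e (N - 1)" and "e > 0"
    and determined: "\<And>u::'a. u \<in> trace_zero q \<Longrightarrow>
      Eis (u ^ q + u) u ^ e = \<Phi> (u ^ (Q + 1) + (u ^ q) ^ (Q + 1))"
    using Eis_power_determined_by_power_add_frob_power[OF assms] by blast
  have "inj (\<lambda>z::'a eis. z ^ e)"
    by (rule inj_power_if_coprime) fact+
  moreover have "Eis (u ^ q + u) u ^ e = Eis (v ^ q + v) v ^ e"
    by (simp only: determined[OF \<open>u \<in> trace_zero q\<close>] determined[OF \<open>v \<in> trace_zero q\<close>] eq)
  ultimately have "Eis (u ^ q + u) u = Eis (v ^ q + v) v"
    by (rule injD)
  then show "u = v"
    by simp
qed

section \<open>Trace decomposition\<close>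

lemma inj_by_trace_decomposition:
  fixes f G K :: "'a::comm_ring_1 \<Rightarrow> 'a"
  assumes char: "CHAR('a) = 2" and q: "q = 2 ^ k" and cube: "\<And>x::'a. x ^ q ^ 3 = x"
    and split: "\<And>u t. u \<in> trace_zero q \<Longrightarrow> t ^ q = t \<Longrightarrow> f (u + t) = G u + t ^ (Q + 1)"
    and frob: "\<And>u. u \<in> trace_zero q \<Longrightarrow> G u + G u ^ q = K u"
    and K_inj: "inj_on K (trace_zero q)" and P_inj: "inj (\<lambda>t::'a. t ^ (Q + 1))"
  shows "inj f"
proof -
  define T where "T x = x + x ^ q + (x ^ q) ^ q" for x :: 'a
  define U where "U x = x ^ q + (x ^ q) ^ q" for x :: 'a
  have cube': "((x ^ q) ^ q) ^ q = x" for x :: 'a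
    using cube[of x] by (simp add: power3_eq_cube power_mult)
  note frob_q = add_power_CHAR_2[OF char q]
  have T_fixed: "T x ^ q = T x" for x
    by (simp add: T_def frob_q cube' add_ac)
  have U_trace_zero: "U x \<in> trace_zero q" for x
    by (simp add: trace_zero_def U_def frob_q cube' algebra_simps numeral_CHAR_2[OF char])
  have decomp: "x = U x + T x" for x
    by (simp add: U_def T_def algebra_simps numeral_CHAR_2[OF char])
  have f_decomp: "f x = G (U x) + T x ^ (Q + 1)" for x
    using split[OF U_trace_zero T_fixed] decomp by metis
  have f_trace: "f x + f x ^ q = K (U x)" for x
  proof -
    have P_fixed: "(T x ^ (Q + 1)) ^ q = T x ^ (Q + 1)"
      by (metis power_power_commute T_fixed)
    have "f x + f x ^ q = (G (U x) + G (U x) ^ q) + (T x ^ (Q + 1) + T x ^ (Q + 1))"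
      by (simp only: f_decomp frob_q P_fixed) (simp only: add_ac)
    then show ?thesis
      by (simp add: frob[OF U_trace_zero] add_self_CHAR_2[OF char])
  qed
  show "inj f"
  proof (rule injI)
    fix x y
    assume "f x = f y"
    then have "K (U x) = K (U y)"
      using f_trace by metis
    then have U: "U x = U y"
      using K_inj U_trace_zero by (meson inj_onD)
    then have "T x ^ (Q + 1) = T y ^ (Q + 1)"
      using \<open>f x = f y\<close> f_decomp by (metis add_left_cancel)
    then have "T x = T y"
      using P_inj by (meson injD)
    then show "x = y"
      using U decomp by metis
  qed
qed

lemma inj_by_trace_decomposition_ord2:
  fixes f G :: "'a::comm_ring_1 \<Rightarrow> 'a"
  assumes char: "CHAR('a) = 2" and q: "q = 2 ^ k" and Q: "Q = 2 ^ l"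
    and "k > 0" and ord2: "ord2 k \<le> ord2 l" and cube: "\<And>x::'a. x ^ q ^ 3 = x"
    and split: "\<And>u t. u \<in> trace_zero q \<Longrightarrow> t ^ q = t \<Longrightarrow> f (u + t) = G u + t ^ (Q + 1)"
    and frob: "\<And>u. u \<in> trace_zero q \<Longrightarrow>
      G u + G u ^ q = (u ^ (Q + 1) + (u ^ q) ^ (Q + 1)) ^ q ^ j"
  shows "inj f"
proof (rule inj_by_trace_decomposition[OF char q cube split frob])
  have "(x ^ q ^ j) ^ q ^ (2 * j) = x" for x :: 'a
    using power_power_eq_self[OF cube, of x j]
    by (simp flip: power_mult power_add power_mult_distrib add: mult.commute)
  then have frob_inj: "inj (\<lambda>x::'a. x ^ q ^ j)"
    by (metis injI)
  show "inj_on (\<lambda>u::'a. (u ^ (Q + 1) + (u ^ q) ^ (Q + 1)) ^ q ^ j) (trace_zero q)"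
    using comp_inj_on[OF inj_on_trace_zero_power_add_frob_power[OF char q Q \<open>k > 0\<close> ord2 cube]
        inj_on_subset[OF frob_inj subset_UNIV]]
    by (simp add: comp_def)
  show "inj (\<lambda>t::'a. t ^ (Q + 1))"
    using power_two_pow_eq_self_if_cube(1)[OF q cube]
      coprime_two_pow_add_one_two_pow_triple_diff_one[OF \<open>k > 0\<close> ord2]
    by (intro inj_power_if_coprime[where N = "2 ^ (3 * k)"]) (simp_all add: Q)
qed

context
  fixes k l q Q :: nat
  assumes char: "CHAR('a::comm_ring_1) = 2" and q: "q = 2 ^ k" and Q: "Q = 2 ^ l"
    and "k > 0" and ord2: "ord2 k \<le> ord2 l" and cube: "\<And>x::'a. x ^ q ^ 3 = x"
begin

lemmas char2_simps = minus_CHAR_2[OF char] numeral_CHAR_2[OF char]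

lemmas expand_powers = power_add power_mult power2_eq_square power_one_right
  add_power_CHAR_2[OF char q] add_power_CHAR_2[OF char Q]

lemma inj_f1: "inj (\<lambda>x::'a. x ^ (q^2 * Q + q) + x ^ (q * Q + q^2) + x ^ (Q + 1))"
proof (rule inj_by_trace_decomposition_ord2[OF char q Q \<open>k > 0\<close> ord2 cube,
    where G = "\<lambda>u. u ^ Q * u ^ q + (u ^ q) ^ Q * u + u ^ Q * u" and j = 0])
  fix u t :: 'a
  assume u: "u \<in> trace_zero q" and t: "t ^ q = t"
  show "(u + t) ^ (q^2 * Q + q) + (u + t) ^ (q * Q + q^2) + (u + t) ^ (Q + 1)
    = (u ^ Q * u ^ q + (u ^ q) ^ Q * u + u ^ Q * u) + t ^ (Q + 1)"
    by (simp only: expand_powers t frob_trace_zero(1)[OF char q Q u])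
      (simp add: algebra_simps char2_simps)
next
  fix u :: 'a
  assume u: "u \<in> trace_zero q"
  show "(u ^ Q * u ^ q + (u ^ q) ^ Q * u + u ^ Q * u) + (u ^ Q * u ^ q + (u ^ q) ^ Q * u + u ^ Q * u) ^ q
    = (u ^ (Q + 1) + (u ^ q) ^ (Q + 1)) ^ q ^ 0"
    by (simp only: power_0 power_one_right power_add add_power_CHAR_2[OF char q] power_mult_distrib
        frob_trace_zero[OF char q Q u])
      (simp add: algebra_simps char2_simps)
qed

lemma inj_f2: "inj (\<lambda>x::'a. x ^ (q^2 * Q + 1) + x ^ (q * Q + 1) + x ^ (Q + q^2)
  + x ^ (Q + q) - x ^ (Q + 1))"
proof (rule inj_by_trace_decomposition_ord2[OF char q Q \<open>k > 0\<close> ord2 cube,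
    where G = "\<lambda>u. u ^ Q * u" and j = 0])
  fix u t :: 'a
  assume u: "u \<in> trace_zero q" and t: "t ^ q = t"
  show "(u + t) ^ (q^2 * Q + 1) + (u + t) ^ (q * Q + 1) + (u + t) ^ (Q + q^2)
    + (u + t) ^ (Q + q) - (u + t) ^ (Q + 1) = u ^ Q * u + t ^ (Q + 1)"
    by (simp only: expand_powers t frob_trace_zero(1)[OF char q Q u])
      (simp add: algebra_simps char2_simps)
next
  fix u :: 'a
  assume u: "u \<in> trace_zero q"
  show "u ^ Q * u + (u ^ Q * u) ^ q = (u ^ (Q + 1) + (u ^ q) ^ (Q + 1)) ^ q ^ 0"
    by (simp only: power_0 power_one_right power_add power_mult_distrib
        frob_trace_zero[OF char q Q u])
qed

lemma inj_f3: "inj (\<lambda>x::'a. x ^ (q^2 * Q + q) + x ^ (q * Q + q) + x ^ (Q + q^2)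
  - x ^ (Q + q) + x ^ (Q + 1))"
proof (rule inj_by_trace_decomposition_ord2[OF char q Q \<open>k > 0\<close> ord2 cube,
    where G = "\<lambda>u. u ^ Q * u ^ q" and j = 2])
  fix u t :: 'a
  assume u: "u \<in> trace_zero q" and t: "t ^ q = t"
  show "(u + t) ^ (q^2 * Q + q) + (u + t) ^ (q * Q + q) + (u + t) ^ (Q + q^2)
    - (u + t) ^ (Q + q) + (u + t) ^ (Q + 1) = u ^ Q * u ^ q + t ^ (Q + 1)"
    by (simp only: expand_powers t frob_trace_zero(1)[OF char q Q u])
      (simp add: algebra_simps char2_simps)
next
  fix u :: 'a
  assume u: "u \<in> trace_zero q"
  show "u ^ Q * u ^ q + (u ^ Q * u ^ q) ^ q = (u ^ (Q + 1) + (u ^ q) ^ (Q + 1)) ^ q ^ 2"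
    unfolding power2_eq_square power_mult frob_power_add_frob_power[OF char q Q u]
    by (simp only: add_power_CHAR_2[OF char q] power_mult_distrib frob_trace_zero[OF char q Q u])
      (simp add: algebra_simps char2_simps)
qed

lemma inj_f4: "inj (\<lambda>x::'a. x ^ (q^2 * Q + q^2) + x ^ (q * Q + q^2) - x ^ (Q + q^2)
  + x ^ (Q + q) + x ^ (Q + 1))"
proof (rule inj_by_trace_decomposition_ord2[OF char q Q \<open>k > 0\<close> ord2 cube,
    where G = "\<lambda>u. u ^ Q * u + u ^ Q * u ^ q" and j = 1])
  fix u t :: 'a
  assume u: "u \<in> trace_zero q" and t: "t ^ q = t"
  show "(u + t) ^ (q^2 * Q + q^2) + (u + t) ^ (q * Q + q^2) - (u + t) ^ (Q + q^2)
    + (u + t) ^ (Q + q) + (u + t) ^ (Q + 1) = (u ^ Q * u + u ^ Q * u ^ q) + t ^ (Q + 1)"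
    by (simp only: expand_powers t frob_trace_zero(1)[OF char q Q u])
      (simp add: algebra_simps char2_simps)
next
  fix u :: 'a
  assume u: "u \<in> trace_zero q"
  show "(u ^ Q * u + u ^ Q * u ^ q) + (u ^ Q * u + u ^ Q * u ^ q) ^ q
    = (u ^ (Q + 1) + (u ^ q) ^ (Q + 1)) ^ q ^ 1"
    unfolding power_one_right frob_power_add_frob_power[OF char q Q u]
    by (simp only: add_power_CHAR_2[OF char q] power_mult_distrib frob_trace_zero[OF char q Q u])
      (simp add: algebra_simps char2_simps)
qed

end

section \<open>Collisions from roots of unity\<close>

lemma not_inj_if_not_coprime:
  fixes f :: "'a::{finite,field} \<Rightarrow> 'a" and q Q :: nat
  assumes card: "card (UNIV :: 'a set) = q ^ 3" and "\<not> coprime (q - 1) (Q + 1)"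
    and collapse: "\<And>z. z ^ q = z \<Longrightarrow> z ^ Q * z = 1 \<Longrightarrow> f z = f 1"
  shows "\<not> inj f"
proof -
  define d where "d = gcd (q - 1) (Q + 1)"
  have "d > 1"
    using assms(2) unfolding d_def coprime_iff_gcd_eq_1 by (simp add: nat_neq_iff)
  obtain r where q: "q = Suc r"
    using card finite_UNIV_card_ge_0[where 'a = 'a] by (cases q) auto
  have "q ^ 3 - 1 = (q - 1) * (r * r + 3 * r + 3)"
    unfolding q by (simp add: power3_eq_cube algebra_simps)
  then have "d dvd card (UNIV :: 'a set) - 1"
    unfolding card d_def by simp
  then obtain z :: 'a where "z \<noteq> 1" and z: "z ^ d = 1"
    using finite_field_nontrivial_root_of_unity \<open>d > 1\<close> by blast
  have root_of_unity: "z ^ n = 1" if "d dvd n" for n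
    using that z by (metis dvdE power_mult power_one)
  have "z ^ q = z"
    using root_of_unity[of "q - 1"] unfolding q d_def by simp
  moreover have "z ^ Q * z = 1"
    using root_of_unity[of "Q + 1"] unfolding d_def by (simp add: mult.commute)
  ultimately have "f z = f 1"
    by (rule collapse)
  then show ?thesis
    using \<open>z \<noteq> 1\<close> by (meson injD)
qed

text \<open>The premise \<open>inj\<close> has exactly the hypotheses of the context of \<open>inj_f1\<close>,
  \<open>inj_f2\<close>, \<open>inj_f3\<close> and \<open>inj_f4\<close>, so that these lemmas can be supplied as they are.\<close>

lemma bij_iff_gcd_eq_one:
  fixes f :: "'a::{finite,field} \<Rightarrow> 'a" and p k l :: nat
  assumes "prime p" and "k > 0" and card: "card (UNIV :: 'a set) = p ^ (3 * k)"
    and inj: "CHAR('a) = 2 \<Longrightarrow> p ^ k = 2 ^ k \<Longrightarrow> p ^ l = 2 ^ l \<Longrightarrow> k > 0 \<Longrightarrow>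
      ord2 k \<le> ord2 l \<Longrightarrow> (\<And>x::'a. x ^ (p ^ k) ^ 3 = x) \<Longrightarrow> inj f"
    and collapse: "\<And>z. z ^ p ^ k = z \<Longrightarrow> z ^ p ^ l * z = 1 \<Longrightarrow> f z = f 1"
  shows "gcd (p ^ k - 1) (p ^ l + 1) = 1 \<longleftrightarrow> bij f"
proof
  have card_q: "card (UNIV :: 'a set) = (p ^ k) ^ 3"
    using card by (metis power_mult mult.commute)
  show "bij f" if "gcd (p ^ k - 1) (p ^ l + 1) = 1"
  proof -
    have "p = 2" and "ord2 k \<le> ord2 l"
      using that gcd_eq_one_iff_ord2_le[OF assms(1,2)] by auto
    moreover have "CHAR('a) = 2"
      using CHAR_finite_field[OF assms(1) card] \<open>p = 2\<close> by simp
    moreover have "x ^ (p ^ k) ^ 3 = x" for x :: 'a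
      using finite_field_power_card[of x] card_q by simp
    ultimately have "inj f"
      using \<open>k > 0\<close> by (intro inj) simp_all
    then show "bij f"
      by (simp add: bij_def finite_UNIV_inj_surj)
  qed
  show "gcd (p ^ k - 1) (p ^ l + 1) = 1" if "bij f"
  proof (rule ccontr)
    assume "gcd (p ^ k - 1) (p ^ l + 1) \<noteq> 1"
    then have "\<not> coprime (p ^ k - 1) (p ^ l + 1)"
      by (simp add: coprime_iff_gcd_eq_1)
    with card_q have "\<not> inj f"
      using collapse by (rule not_inj_if_not_coprime)
    then show False
      using \<open>bij f\<close> by (simp add: bij_def)
  qed
qed

theorem corollary1p2:
  fixes p k l :: nat
  assumes "prime p" and "k > 0"
    and "card (UNIV :: 'a::{finite,field} set) = p ^ (3 * k)"
  shows "let q = p ^ k; Q = p ^ l in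
    ((gcd (q - 1) (Q + 1) = 1) \<longleftrightarrow> (p = 2 \<and> ord2 k \<le> ord2 l))
    \<and> ((gcd (q - 1) (Q + 1) = 1) \<longleftrightarrow>
         bij (\<lambda>x::'a. x ^ (q^2 * Q + q) + x ^ (q * Q + q^2) + x ^ (Q + 1)))
    \<and> ((gcd (q - 1) (Q + 1) = 1) \<longleftrightarrow>
         bij (\<lambda>x::'a. x ^ (q^2 * Q + 1) + x ^ (q * Q + 1) + x ^ (Q + q^2)
                       + x ^ (Q + q) - x ^ (Q + 1)))
    \<and> ((gcd (q - 1) (Q + 1) = 1) \<longleftrightarrow>
         bij (\<lambda>x::'a. x ^ (q^2 * Q + q) + x ^ (q * Q + q) + x ^ (Q + q^2)
                       - x ^ (Q + q) + x ^ (Q + 1)))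
    \<and> ((gcd (q - 1) (Q + 1) = 1) \<longleftrightarrow>
         bij (\<lambda>x::'a. x ^ (q^2 * Q + q^2) + x ^ (q * Q + q^2) - x ^ (Q + q^2)
                       + x ^ (Q + q) + x ^ (Q + 1)))"
  unfolding Let_def
  using gcd_eq_one_iff_ord2_le[OF assms(1,2)]
    bij_iff_gcd_eq_one[OF assms inj_f1] bij_iff_gcd_eq_one[OF assms inj_f2]
    bij_iff_gcd_eq_one[OF assms inj_f3] bij_iff_gcd_eq_one[OF assms inj_f4]
  \<comment> \<open>Rewriting each monomial to \<open>z ^ p ^ l * z\<close> discharges the collision premises.\<close>
  by (simp only: power_add power_mult power2_eq_square power_one_right power_one) simp

end
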